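(* Let $H$ and $G$ be locally compact, Hausdorff, étale groupoids, let $c : H \to \mathbb{Z}$ be a continuous cocycle, and let $\alpha : G \to G$ be an automorphism. Then the groupoid $H \times_{c,\alpha} G$, endowed with the product topology, is locally compact, Hausdorff and étale. If $G$ and $H$ are second countable, so is $H\times_{c,\alpha}G$. If $G$ and $H$ are ample, so is $H \times_{c,\alpha} G$.
   Context: A cocycle satisfies $c(gh) = c(g)+c(h)$ whenever $s(g) = r(h)$. An automorphism of a topological groupoid is a homeomorphism preserving the groupoid structure. $H \times_{c,\alpha} G$ is the set $H \times G$ with unit space $H^{(0)}\times G^{(0)}$, $r(h,g) = (r(h),r(g))$, $s(h,g) = (s(h), \alpha^{c(h)}(s(g)))$, product $(h_1,g_1)(h_2,g_2) = (h_1h_2, g_1\alpha^{-c(h_1)}(g_2))$ when $s(h_1,g_1) = r(h_2,g_2)$, and inverse $(h,g)^{-1} = (h^{-1},\alpha^{c(h)}(g^{-1}))$. A groupoid is étale if its range map is a local homeomorphism, and ample if it has a basis of compact open bisections. *)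

theory Defs
  imports "HOL-Analysis.Analysis"
begin

text \<open>A topological groupoid on a carrier set of arrows, with unit space a subset
of the arrows.  Only the values on the relevant sets matter.\<close>

record 'a tgroupoid =
  arr   :: "'a set"
  units :: "'a set"
  rng   :: "'a \<Rightarrow> 'a"
  src   :: "'a \<Rightarrow> 'a"
  mult  :: "'a \<Rightarrow> 'a \<Rightarrow> 'a"
  ginv  :: "'a \<Rightarrow> 'a"
  gtop  :: "'a topology"

definition composable :: "'a tgroupoid \<Rightarrow> ('a \<times> 'a) set" where
  "composable G = {(g, h). g \<in> arr G \<and> h \<in> arr G \<and> src G g = rng G h}"

definition groupoid :: "'a tgroupoid \<Rightarrow> bool" where
  "groupoid G \<longleftrightarrow>
     units G \<subseteq> arr G \<and>
     (\<forall>g\<in>arr G. rng G g \<in> units G \<and> src G g \<in> units G) \<and>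
     (\<forall>x\<in>units G. rng G x = x \<and> src G x = x) \<and>
     (\<forall>(g, h)\<in>composable G. mult G g h \<in> arr G \<and>
         rng G (mult G g h) = rng G g \<and> src G (mult G g h) = src G h) \<and>
     (\<forall>g\<in>arr G. \<forall>h\<in>arr G. \<forall>k\<in>arr G. src G g = rng G h \<longrightarrow> src G h = rng G k \<longrightarrow>
         mult G (mult G g h) k = mult G g (mult G h k)) \<and>
     (\<forall>g\<in>arr G. mult G (rng G g) g = g \<and> mult G g (src G g) = g) \<and>
     (\<forall>g\<in>arr G. ginv G g \<in> arr G \<and> rng G (ginv G g) = src G g \<and>
         src G (ginv G g) = rng G g \<and>
         mult G g (ginv G g) = rng G g \<and> mult G (ginv G g) g = src G g)"

definition topological_groupoid :: "'a tgroupoid \<Rightarrow> bool" where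
  "topological_groupoid G \<longleftrightarrow> groupoid G \<and> topspace (gtop G) = arr G \<and>
     continuous_map (subtopology (prod_topology (gtop G) (gtop G)) (composable G)) (gtop G)
        (\<lambda>(g, h). mult G g h) \<and>
     continuous_map (gtop G) (gtop G) (ginv G)"

definition etale :: "'a tgroupoid \<Rightarrow> bool" where
  "etale G \<longleftrightarrow> (\<forall>g\<in>arr G. \<exists>U. openin (gtop G) U \<and> g \<in> U \<and>
      openin (subtopology (gtop G) (units G)) (rng G ` U) \<and>
      homeomorphic_map (subtopology (gtop G) U) (subtopology (gtop G) (rng G ` U)) (rng G))"

definition open_bisection :: "'a tgroupoid \<Rightarrow> 'a set \<Rightarrow> bool" where
  "open_bisection G U \<longleftrightarrow> openin (gtop G) U \<and>
     openin (subtopology (gtop G) (units G)) (rng G ` U) \<and>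
     homeomorphic_map (subtopology (gtop G) U) (subtopology (gtop G) (rng G ` U)) (rng G) \<and>
     openin (subtopology (gtop G) (units G)) (src G ` U) \<and>
     homeomorphic_map (subtopology (gtop G) U) (subtopology (gtop G) (src G ` U)) (src G)"

definition ample :: "'a tgroupoid \<Rightarrow> bool" where
  "ample G \<longleftrightarrow> (\<forall>V. openin (gtop G) V \<longrightarrow> (\<forall>g\<in>V. \<exists>B. open_bisection G B \<and>
      compactin (gtop G) B \<and> g \<in> B \<and> B \<subseteq> V))"

definition cocycle :: "'a tgroupoid \<Rightarrow> ('a \<Rightarrow> int) \<Rightarrow> bool" where
  "cocycle G c \<longleftrightarrow> (\<forall>(g, h)\<in>composable G. c (mult G g h) = c g + c h)"

definition groupoid_automorphism :: "'a tgroupoid \<Rightarrow> ('a \<Rightarrow> 'a) \<Rightarrow> bool" where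
  "groupoid_automorphism G \<alpha> \<longleftrightarrow>
     bij_betw \<alpha> (arr G) (arr G) \<and> homeomorphic_map (gtop G) (gtop G) \<alpha> \<and>
     \<alpha> ` units G = units G \<and>
     (\<forall>g\<in>arr G. rng G (\<alpha> g) = \<alpha> (rng G g) \<and> src G (\<alpha> g) = \<alpha> (src G g) \<and>
        ginv G (\<alpha> g) = \<alpha> (ginv G g)) \<and>
     (\<forall>(g, h)\<in>composable G. \<alpha> (mult G g h) = mult G (\<alpha> g) (\<alpha> h))"

definition apow :: "'a tgroupoid \<Rightarrow> ('a \<Rightarrow> 'a) \<Rightarrow> int \<Rightarrow> 'a \<Rightarrow> 'a" where
  "apow G \<alpha> n = (if 0 \<le> n then \<alpha> ^^ nat n else (inv_into (arr G) \<alpha>) ^^ nat (- n))"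

definition twisted_product ::
  "'h tgroupoid \<Rightarrow> ('h \<Rightarrow> int) \<Rightarrow> ('g \<Rightarrow> 'g) \<Rightarrow> 'g tgroupoid \<Rightarrow> ('h \<times> 'g) tgroupoid" where
  "twisted_product H c \<alpha> G = \<lparr>
     arr = arr H \<times> arr G,
     units = units H \<times> units G,
     rng = (\<lambda>(h, g). (rng H h, rng G g)),
     src = (\<lambda>(h, g). (src H h, apow G \<alpha> (c h) (src G g))),
     mult = (\<lambda>(h1, g1) (h2, g2). (mult H h1 h2, mult G g1 (apow G \<alpha> (- c h1) g2))),
     ginv = (\<lambda>(h, g). (ginv H h, apow G \<alpha> (c h) (ginv G g))),
     gtop = prod_topology (gtop H) (gtop G) \<rparr>"

end

theory Submission
  imports Defs
begin

text \<open>
  The twisted product lives on the product space \<open>H \<times> G\<close>, so local compactness, the Hausdorff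
  property and second countability come from the factors.  The twist only enters through the
  homeomorphisms \<open>\<alpha>\<^bsup>c h\<^esup>\<close>, and since \<open>c\<close> is locally constant, on each clopen level set
  \<open>{c = n}\<close> they are the single groupoid automorphism \<open>\<alpha>\<^sup>n\<close>.  Hence multiplication and inversion are
  continuous piece by piece, and over such a level set the range and source maps are products
  of the range map of \<open>H\<close> with that of \<open>G\<close>, resp. of the source map of \<open>H\<close> with
  \<open>\<alpha>\<^sup>n \<circ> src\<close>.  So products of (compact) open bisections lying in a level set of \<open>c\<close> are (compact)
  open bisections of the twisted product, which gives the etale and ample properties.
\<close>

lemma continuous_map_discrete_indexed:
  assumes k: "continuous_map X (discrete_topology UNIV) k"
    and f: "\<And>n. continuous_map X Y (f n)"
  shows "continuous_map X Y (\<lambda>x. f (k x) x)"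
  unfolding continuous_map
proof (intro conjI allI impI)
  show "(\<lambda>x. f (k x) x) ` topspace X \<subseteq> topspace Y"
    using f by (auto simp: continuous_map_def)
  fix U assume U: "openin Y U"
  have "{x \<in> topspace X. f (k x) x \<in> U} =
        (\<Union>n. {x \<in> topspace X. k x \<in> {n}} \<inter> {x \<in> topspace X. f n x \<in> U})"
    by auto
  moreover have "openin X ({x \<in> topspace X. k x \<in> {n}} \<inter> {x \<in> topspace X. f n x \<in> U})" for n
    by (rule openin_Int[OF openin_continuous_map_preimage[OF k]
      openin_continuous_map_preimage[OF f U]])
      simp
  ultimately show "openin X {x \<in> topspace X. f (k x) x \<in> U}"
    by (metis (no_types, lifting) openin_Union imageE)
qed

lemma homeomorphic_map_prod:
  assumes "homeomorphic_map X X' f" "homeomorphic_map Y Y' g"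
  shows "homeomorphic_map (prod_topology X Y) (prod_topology X' Y') (\<lambda>(x, y). (f x, g y))"
proof -
  obtain f' g' where "homeomorphic_maps X X' f f'" "homeomorphic_maps Y Y' g g'"
    using assms homeomorphic_map_maps by metis
  then have "homeomorphic_maps (prod_topology X Y) (prod_topology X' Y')
               (\<lambda>(x, y). (f x, g y)) (\<lambda>(x, y). (f' x, g' y))"
    by (simp add: homeomorphic_maps_prod)
  then show ?thesis
    using homeomorphic_map_maps by blast
qed

lemma second_countable_prod_topology:
  assumes "second_countable X" "second_countable Y"
  shows "second_countable (prod_topology X Y)"
proof -
  obtain \<B>X where \<B>X: "countable \<B>X" "\<forall>V\<in>\<B>X. openin X V"
      "\<forall>U x. openin X U \<and> x \<in> U \<longrightarrow> (\<exists>V\<in>\<B>X. x \<in> V \<and> V \<subseteq> U)"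
    using assms(1) unfolding second_countable_def by blast
  obtain \<B>Y where \<B>Y: "countable \<B>Y" "\<forall>V\<in>\<B>Y. openin Y V"
      "\<forall>U y. openin Y U \<and> y \<in> U \<longrightarrow> (\<exists>V\<in>\<B>Y. y \<in> V \<and> V \<subseteq> U)"
    using assms(2) unfolding second_countable_def by blast
  show ?thesis
    unfolding second_countable_def
  proof (intro exI[of _ "(\<lambda>(U, V). U \<times> V) ` (\<B>X \<times> \<B>Y)"] conjI ballI allI impI)
    show "countable ((\<lambda>(U, V). U \<times> V) ` (\<B>X \<times> \<B>Y))"
      using \<B>X(1) \<B>Y(1) by simp
  next
    fix W assume "W \<in> (\<lambda>(U, V). U \<times> V) ` (\<B>X \<times> \<B>Y)"
    then show "openin (prod_topology X Y) W"
      using \<B>X(2) \<B>Y(2) by (auto simp: openin_prod_Times_iff)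
  next
    fix S z assume "openin (prod_topology X Y) S \<and> z \<in> S"
    then obtain U V where UV: "openin X U" "openin Y V" "fst z \<in> U" "snd z \<in> V" "U \<times> V \<subseteq> S"
      by (metis openin_prod_topology_alt prod.collapse)
    obtain U' where "U' \<in> \<B>X" "fst z \<in> U'" "U' \<subseteq> U"
      using \<B>X(3) UV(1,3) by meson
    moreover obtain V' where "V' \<in> \<B>Y" "snd z \<in> V'" "V' \<subseteq> V"
      using \<B>Y(3) UV(2,4) by meson
    ultimately show "\<exists>W\<in>(\<lambda>(U, V). U \<times> V) ` (\<B>X \<times> \<B>Y). z \<in> W \<and> W \<subseteq> S"
      using UV(5) by (intro bexI[of _ "U' \<times> V'"]) (auto simp: mem_Times_iff)
  qed
qed

lemma prod_homeomorphic_onto_openin: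
  assumes "openin (subtopology X WX) (f ` S)"
    and "homeomorphic_map (subtopology X S) (subtopology X (f ` S)) f"
    and "openin (subtopology Y WY) (g ` T)"
    and "homeomorphic_map (subtopology Y T) (subtopology Y (g ` T)) g"
  shows "openin (subtopology (prod_topology X Y) (WX \<times> WY)) ((\<lambda>(x, y). (f x, g y)) ` (S \<times> T))"
    and "homeomorphic_map (subtopology (prod_topology X Y) (S \<times> T))
           (subtopology (prod_topology X Y) ((\<lambda>(x, y). (f x, g y)) ` (S \<times> T)))
           (\<lambda>(x, y). (f x, g y))"
  using assms
  by (simp_all add: image_paired_Times subtopology_Times openin_prod_Times_iff
    homeomorphic_map_prod)

lemma open_bisectionD:
  assumes "open_bisection X U"
  shows "openin (gtop X) U"
    and "openin (subtopology (gtop X) (units X)) (rng X ` U)"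
    and "homeomorphic_map (subtopology (gtop X) U) (subtopology (gtop X) (rng X ` U)) (rng X)"
    and "openin (subtopology (gtop X) (units X)) (src X ` U)"
    and "homeomorphic_map (subtopology (gtop X) U) (subtopology (gtop X) (src X ` U)) (src X)"
  using assms by (simp_all add: open_bisection_def)

lemma cocycle_mult:
  "cocycle X c \<Longrightarrow> g \<in> arr X \<Longrightarrow> h \<in> arr X \<Longrightarrow> src X g = rng X h \<Longrightarrow>
     c (mult X g h) = c g + c h"
  by (auto simp: cocycle_def composable_def)

context
  fixes X :: "'a tgroupoid"
  assumes X: "groupoid X"
begin

lemma groupoid_units_arr: "u \<in> units X \<Longrightarrow> u \<in> arr X"
  and groupoid_rng_units: "g \<in> arr X \<Longrightarrow> rng X g \<in> units X"
  and groupoid_src_units: "g \<in> arr X \<Longrightarrow> src X g \<in> units X"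
  and groupoid_rng_unit: "u \<in> units X \<Longrightarrow> rng X u = u"
  and groupoid_src_unit: "u \<in> units X \<Longrightarrow> src X u = u"
  and groupoid_mult_rng: "g \<in> arr X \<Longrightarrow> mult X (rng X g) g = g"
  and groupoid_mult_src: "g \<in> arr X \<Longrightarrow> mult X g (src X g) = g"
  using X by (auto simp: groupoid_def)

lemma groupoid_rng_arr: "g \<in> arr X \<Longrightarrow> rng X g \<in> arr X"
  and groupoid_src_arr: "g \<in> arr X \<Longrightarrow> src X g \<in> arr X"
  using groupoid_rng_units groupoid_src_units groupoid_units_arr by blast+

lemma groupoid_mult:
  "g \<in> arr X \<Longrightarrow> h \<in> arr X \<Longrightarrow> src X g = rng X h \<Longrightarrow>
     mult X g h \<in> arr X \<and> rng X (mult X g h) = rng X g \<and> src X (mult X g h) = src X h"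
  using X unfolding groupoid_def composable_def by blast

lemma groupoid_assoc:
  "g \<in> arr X \<Longrightarrow> h \<in> arr X \<Longrightarrow> k \<in> arr X \<Longrightarrow> src X g = rng X h \<Longrightarrow> src X h = rng X k \<Longrightarrow>
     mult X (mult X g h) k = mult X g (mult X h k)"
  using X unfolding groupoid_def by blast

lemma groupoid_ginv:
  "g \<in> arr X \<Longrightarrow> ginv X g \<in> arr X \<and> rng X (ginv X g) = src X g \<and> src X (ginv X g) = rng X g \<and>
     mult X g (ginv X g) = rng X g \<and> mult X (ginv X g) g = src X g"
  using X by (auto simp: groupoid_def)

lemma cocycle_unit:
  assumes "cocycle X c" "u \<in> units X"
  shows "c u = 0"
proof -
  have "mult X u u = u"
    using groupoid_mult_rng groupoid_rng_unit groupoid_units_arr assms(2) by metis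
  then show ?thesis
    using cocycle_mult[OF assms(1), of u u] groupoid_src_unit groupoid_rng_unit groupoid_units_arr
      assms(2) by simp
qed

lemma cocycle_ginv:
  assumes "cocycle X c" "g \<in> arr X"
  shows "c (ginv X g) = - c g"
  using cocycle_mult[OF assms(1), of g "ginv X g"] cocycle_unit[OF assms(1) groupoid_rng_units]
    groupoid_ginv assms(2) by simp

end

definition continuous_endomorphism :: "'a tgroupoid \<Rightarrow> ('a \<Rightarrow> 'a) \<Rightarrow> bool" where
  "continuous_endomorphism G f \<longleftrightarrow>
     (\<forall>g\<in>arr G. f g \<in> arr G) \<and> (\<forall>u\<in>units G. f u \<in> units G) \<and>
     (\<forall>g\<in>arr G. rng G (f g) = f (rng G g) \<and> src G (f g) = f (src G g) \<and>
        ginv G (f g) = f (ginv G g)) \<and>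
     (\<forall>g\<in>arr G. \<forall>h\<in>arr G. src G g = rng G h \<longrightarrow> f (mult G g h) = mult G (f g) (f h)) \<and>
     continuous_map (gtop G) (gtop G) f"

lemma continuous_endomorphism_funpow:
  assumes "topspace (gtop G) = arr G" "continuous_endomorphism G f"
  shows "continuous_endomorphism G (f ^^ n)"
proof (induction n)
  case 0
  then show ?case
    using assms(1) by (simp add: continuous_endomorphism_def)
next
  case (Suc n)
  then show ?case
    using assms(2) unfolding continuous_endomorphism_def
    by (auto intro: continuous_map_compose)
qed

locale groupoid_automorphism_powers =
  fixes G :: "'g tgroupoid" and \<alpha> :: "'g \<Rightarrow> 'g"
  assumes topological_groupoid: "topological_groupoid G"
    and automorphism: "groupoid_automorphism G \<alpha>"
begin

abbreviation "\<beta> \<equiv> inv_into (arr G) \<alpha>"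
abbreviation "A \<equiv> apow G \<alpha>"

lemma groupoid: "groupoid G"
  and topspace: "topspace (gtop G) = arr G"
  using topological_groupoid by (simp_all add: topological_groupoid_def)

lemma bij_\<alpha>: "bij_betw \<alpha> (arr G) (arr G)"
  using automorphism by (simp add: groupoid_automorphism_def)

lemma \<alpha>_arr: "g \<in> arr G \<Longrightarrow> \<alpha> g \<in> arr G"
  and \<beta>_arr: "g \<in> arr G \<Longrightarrow> \<beta> g \<in> arr G"
  and \<alpha>_\<beta>: "g \<in> arr G \<Longrightarrow> \<alpha> (\<beta> g) = g"
  and \<beta>_\<alpha>: "g \<in> arr G \<Longrightarrow> \<beta> (\<alpha> g) = g"
  using bij_\<alpha> by (auto simp: bij_betw_def inv_into_into f_inv_into_f)

lemma continuous_endomorphism_\<alpha>: "continuous_endomorphism G \<alpha>"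
  using automorphism \<alpha>_arr
  unfolding continuous_endomorphism_def groupoid_automorphism_def composable_def
  by (auto simp: homeomorphic_imp_continuous_map)

lemma continuous_endomorphism_\<beta>: "continuous_endomorphism G \<beta>"
proof -
  have \<alpha>: "\<And>g. g \<in> arr G \<Longrightarrow> rng G (\<alpha> g) = \<alpha> (rng G g) \<and> src G (\<alpha> g) = \<alpha> (src G g) \<and>
            ginv G (\<alpha> g) = \<alpha> (ginv G g)"
    "\<And>g h. g \<in> arr G \<Longrightarrow> h \<in> arr G \<Longrightarrow> src G g = rng G h \<Longrightarrow>
            \<alpha> (mult G g h) = mult G (\<alpha> g) (\<alpha> h)"
    using continuous_endomorphism_\<alpha> unfolding continuous_endomorphism_def by auto
  have inj: "x = y" if "x \<in> arr G" "y \<in> arr G" "\<alpha> x = \<alpha> y" for x y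
    using that \<beta>_\<alpha> by metis
  have arr: "rng G g \<in> arr G \<and> src G g \<in> arr G \<and> ginv G g \<in> arr G" if "g \<in> arr G" for g
    using that groupoid_rng_arr[OF groupoid] groupoid_src_arr[OF groupoid]
      groupoid_ginv[OF groupoid]
    by blast
  have compat: "rng G (\<beta> g) = \<beta> (rng G g) \<and> src G (\<beta> g) = \<beta> (src G g) \<and>
                ginv G (\<beta> g) = \<beta> (ginv G g)" if "g \<in> arr G" for g
  proof -
    have "rng G g = \<alpha> (rng G (\<beta> g))" "src G g = \<alpha> (src G (\<beta> g))"
      "ginv G g = \<alpha> (ginv G (\<beta> g))"
      using \<alpha>(1)[OF \<beta>_arr[OF that]] \<alpha>_\<beta>[OF that] by simp_all
    moreover have "rng G (\<beta> g) \<in> arr G" "src G (\<beta> g) \<in> arr G" "ginv G (\<beta> g) \<in> arr G"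
      using arr \<beta>_arr that by blast+
    ultimately show ?thesis
      using inj arr \<alpha>_\<beta> \<beta>_arr that by (metis (no_types))
  qed
  have mult: "\<beta> (mult G g h) = mult G (\<beta> g) (\<beta> h)"
    if "g \<in> arr G" "h \<in> arr G" "src G g = rng G h" for g h
  proof -
    have "src G (\<beta> g) = rng G (\<beta> h)"
      using compat that by simp
    moreover have "\<alpha> (mult G (\<beta> g) (\<beta> h)) = mult G g h"
      using \<alpha>(2) calculation that \<beta>_arr \<alpha>_\<beta> by simp
    ultimately show ?thesis
      using \<beta>_\<alpha> \<beta>_arr groupoid_mult[OF groupoid] that by metis
  qed
  have units: "\<beta> u \<in> units G" if "u \<in> units G" for u
  proof -
    obtain v where "v \<in> units G" "u = \<alpha> v"
      using automorphism \<open>u \<in> units G\<close> unfolding groupoid_automorphism_def by blast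
    then show ?thesis
      using \<beta>_\<alpha> groupoid_units_arr[OF groupoid] by simp
  qed
  have continuous: "continuous_map (gtop G) (gtop G) \<beta>"
  proof -
    have "homeomorphic_map (gtop G) (gtop G) \<alpha>"
      using automorphism by (simp add: groupoid_automorphism_def)
    then obtain \<alpha>' where \<alpha>': "homeomorphic_maps (gtop G) (gtop G) \<alpha> \<alpha>'"
      using homeomorphic_map_maps by blast
    then have "continuous_map (gtop G) (gtop G) \<alpha>'" "\<forall>g\<in>arr G. \<alpha>' (\<alpha> g) = g"
      using topspace by (auto simp: homeomorphic_maps_def)
    \<comment> \<open>\<open>\<beta>\<close> is only an \<open>inv_into\<close>; it agrees with the inverse homeomorphism on the arrows.\<close>
    moreover have "\<alpha>' g = \<beta> g" if "g \<in> topspace (gtop G)" for g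
      using calculation(2) \<alpha>_\<beta> \<beta>_arr topspace that by metis
    ultimately show ?thesis
      using continuous_map_eq by blast
  qed
  show ?thesis
    unfolding continuous_endomorphism_def using compat mult units continuous \<beta>_arr by blast
qed

lemma continuous_endomorphism_apow: "continuous_endomorphism G (A n)"
  unfolding apow_def
  using continuous_endomorphism_funpow[OF topspace] continuous_endomorphism_\<alpha>
    continuous_endomorphism_\<beta>
  by auto

lemma apow_arr [simp]: "g \<in> arr G \<Longrightarrow> A n g \<in> arr G"
  and apow_units: "u \<in> units G \<Longrightarrow> A n u \<in> units G"
  and apow_rng [simp]: "g \<in> arr G \<Longrightarrow> rng G (A n g) = A n (rng G g)"
  and apow_src [simp]: "g \<in> arr G \<Longrightarrow> src G (A n g) = A n (src G g)"
  and apow_ginv [simp]: "g \<in> arr G \<Longrightarrow> ginv G (A n g) = A n (ginv G g)"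
  and apow_mult: "g \<in> arr G \<Longrightarrow> h \<in> arr G \<Longrightarrow> src G g = rng G h \<Longrightarrow>
                    A n (mult G g h) = mult G (A n g) (A n h)"
  and continuous_map_apow: "continuous_map (gtop G) (gtop G) (A n)"
  using continuous_endomorphism_apow[of n] unfolding continuous_endomorphism_def by auto

lemma apow_0 [simp]: "A 0 = id"
  by (simp add: apow_def)

lemma apow_plus_1:
  assumes "g \<in> arr G"
  shows "A (n + 1) g = \<alpha> (A n g)"
proof (cases "n \<ge> 0")
  case True
  then have "nat (n + 1) = Suc (nat n)"
    by simp
  with True show ?thesis
    by (simp add: apow_def)
next
  case False
  then have "nat (- n) > 0"
    by simp
  then obtain k where k: "nat (- n) = Suc k"
    using gr0_conv_Suc by blast
  have "(\<beta> ^^ k) g \<in> arr G"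
    using continuous_endomorphism_funpow[OF topspace continuous_endomorphism_\<beta>] assms
    unfolding continuous_endomorphism_def by blast
  moreover have "n + 1 < 0 \<Longrightarrow> nat (- (n + 1)) = k"
    using k by simp
  moreover have "n + 1 \<ge> 0 \<Longrightarrow> k = 0"
    using False k by simp
  ultimately show ?thesis
    using False k assms by (auto simp: apow_def \<alpha>_\<beta>)
qed

lemma apow_minus_1: "g \<in> arr G \<Longrightarrow> A (n - 1) g = \<beta> (A n g)"
  using apow_plus_1[of g "n - 1"] by (simp add: \<beta>_\<alpha>)

lemma apow_apow [simp]:
  assumes "g \<in> arr G"
  shows "A m (A n g) = A (m + n) g"
proof (induction m rule: int_induct[where k = 0])
  case base
  then show ?case by simp
next
  case (step1 i)
  have "A (i + 1) (A n g) = \<alpha> (A (i + n) g)"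
    using apow_plus_1 step1 assms by simp
  also have "\<dots> = A (i + 1 + n) g"
    using apow_plus_1[of g "i + n"] assms by (simp add: ac_simps)
  finally show ?case .
next
  case (step2 i)
  have "A (i - 1) (A n g) = \<beta> (A (i + n) g)"
    using apow_minus_1 step2 assms by simp
  also have "\<dots> = A (i - 1 + n) g"
    using apow_minus_1[of g "i + n"] assms by (simp add: algebra_simps)
  finally show ?case .
qed

lemma homeomorphic_map_apow: "homeomorphic_map (gtop G) (gtop G) (A n)"
proof -
  have "homeomorphic_maps (gtop G) (gtop G) (A n) (A (- n))"
    unfolding homeomorphic_maps_def using continuous_map_apow topspace by simp
  then show ?thesis
    by (rule homeomorphic_maps_imp_map)
qed

lemma homeomorphic_map_apow_subtopology:
  assumes "S \<subseteq> arr G"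
  shows "homeomorphic_map (subtopology (gtop G) S) (subtopology (gtop G) (A n ` S)) (A n)"
  by (rule homeomorphic_map_subtopologies[OF homeomorphic_map_apow]) (use assms topspace in auto)

lemma openin_units_apow_image:
  assumes "openin (subtopology (gtop G) (units G)) S"
  shows "openin (subtopology (gtop G) (units G)) (A n ` S)"
proof -
  obtain Q where Q: "openin (gtop G) Q" "S = Q \<inter> units G"
    using assms openin_subtopology by metis
  have "Q \<subseteq> arr G"
    using openin_subset[OF Q(1)] topspace by simp
  have "A n ` (Q \<inter> units G) = A n ` Q \<inter> units G"
  proof
    show "A n ` Q \<inter> units G \<subseteq> A n ` (Q \<inter> units G)"
    proof
      fix y assume "y \<in> A n ` Q \<inter> units G"
      then obtain w where "w \<in> Q" "y = A n w" "A (- n) y \<in> units G"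
        using apow_units by blast
      then show "y \<in> A n ` (Q \<inter> units G)"
        using \<open>Q \<subseteq> arr G\<close> by auto
    qed
  qed (use apow_units in auto)
  moreover have "openin (gtop G) (A n ` Q)"
    using homeomorphic_imp_open_map[OF homeomorphic_map_apow] Q(1) unfolding open_map_def by blast
  ultimately show ?thesis
    using Q(2) openin_subtopology by blast
qed

end

locale twisted_product_setting = groupoid_automorphism_powers G \<alpha>
  for G :: "'g tgroupoid" and \<alpha> +
  fixes H :: "'h tgroupoid" and c :: "'h \<Rightarrow> int"
  assumes topological_groupoid_H: "topological_groupoid H" and cocycle: "cocycle H c"
begin

abbreviation "T \<equiv> twisted_product H c \<alpha> G"

lemma groupoid_H: "groupoid H"
  and topspace_H: "topspace (gtop H) = arr H"
  using topological_groupoid_H by (simp_all add: topological_groupoid_def)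

lemma twisted_product_simps:
  "arr T = arr H \<times> arr G" "units T = units H \<times> units G"
  "rng T = (\<lambda>(h, g). (rng H h, rng G g))"
  "src T (h, g) = (src H h, A (c h) (src G g))"
  "mult T (h1, g1) (h2, g2) = (mult H h1 h2, mult G g1 (A (- c h1) g2))"
  "ginv T (h, g) = (ginv H h, A (c h) (ginv G g))"
  "gtop T = prod_topology (gtop H) (gtop G)"
  by (simp_all add: twisted_product_def)

lemma composable_twisted_product:
  "((h1, g1), (h2, g2)) \<in> composable T \<longleftrightarrow>
     (h1, h2) \<in> composable H \<and> g1 \<in> arr G \<and> g2 \<in> arr G \<and> A (c h1) (src G g1) = rng G g2"
  by (auto simp: composable_def twisted_product_simps)

text \<open>With \<open>n = c h\<^sub>1\<close>, this turns composability of \<open>(h\<^sub>1, g\<^sub>1)\<close> and \<open>(h\<^sub>2, g\<^sub>2)\<close> into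
  composability of the pair \<open>g\<^sub>1\<close>, \<open>\<alpha>\<^bsup>-n\<^esup> g\<^sub>2\<close> multiplied in the second coordinate.\<close>
lemma src_eq_rng_apow_uminus:
  assumes "g1 \<in> arr G" "g2 \<in> arr G" "A n (src G g1) = rng G g2"
  shows "src G g1 = rng G (A (- n) g2)"
  using assms groupoid_src_arr[OF groupoid] by (simp flip: assms(3))

lemma twisted_product_mult:
  assumes "(x, y) \<in> composable T"
  shows "mult T x y \<in> arr T \<and> rng T (mult T x y) = rng T x \<and> src T (mult T x y) = src T y"
proof -
  obtain h1 g1 h2 g2 where xy: "x = (h1, g1)" "y = (h2, g2)"
    by fastforce
  with assms have "(h1, h2) \<in> composable H" "g1 \<in> arr G" "g2 \<in> arr G"
      "A (c h1) (src G g1) = rng G g2"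
    by (simp_all add: composable_twisted_product)
  then have a: "h1 \<in> arr H" "h2 \<in> arr H" "src H h1 = rng H h2" "g1 \<in> arr G" "g2 \<in> arr G"
      "A (c h1) (src G g1) = rng G g2"
    by (auto simp: composable_def)
  have "mult G g1 (A (- c h1) g2) \<in> arr G \<and> rng G (mult G g1 (A (- c h1) g2)) = rng G g1 \<and>
        src G (mult G g1 (A (- c h1) g2)) = src G (A (- c h1) g2)"
    using groupoid_mult[OF groupoid a(4) _ src_eq_rng_apow_uminus[OF a(4-6)]] a by simp
  then show ?thesis
    using xy a groupoid_mult[OF groupoid_H a(1-3)] cocycle_mult[OF cocycle a(1-3)]
      groupoid_src_arr[OF groupoid a(5)]
    by (simp add: twisted_product_simps)
qed

lemma twisted_product_assoc:
  assumes "x \<in> arr T" "y \<in> arr T" "z \<in> arr T" "src T x = rng T y" "src T y = rng T z"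
  shows "mult T (mult T x y) z = mult T x (mult T y z)"
proof -
  obtain h1 g1 h2 g2 h3 g3 where xyz: "x = (h1, g1)" "y = (h2, g2)" "z = (h3, g3)"
    by (metis prod.collapse)
  with assms have a: "h1 \<in> arr H" "g1 \<in> arr G" "h2 \<in> arr H" "g2 \<in> arr G" "h3 \<in> arr H" "g3 \<in> arr G"
      "src H h1 = rng H h2" "A (c h1) (src G g1) = rng G g2"
      "src H h2 = rng H h3" "A (c h2) (src G g2) = rng G g3"
    by (auto simp: twisted_product_simps)
  let ?a = "A (- c h1) g2" and ?b = "A (- c h1 - c h2) g3" and ?d = "A (- c h2) g3"
  have s1: "src G g1 = rng G ?a"
    using src_eq_rng_apow_uminus a by blast
  have s2: "src G ?a = rng G ?b"
    using src_eq_rng_apow_uminus[OF a(4,6,10)] groupoid_rng_arr[OF groupoid a(6)] a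
    by (simp add: algebra_simps)
  have "mult G (mult G g1 ?a) (A (- c (mult H h1 h2)) g3) = mult G g1 (mult G ?a ?b)"
    using groupoid_assoc[OF groupoid a(2) _ _ s1 s2] a cocycle_mult[OF cocycle a(1,3,7)]
    by (simp add: algebra_simps)
  moreover have "A (- c h1) (mult G g2 ?d) = mult G ?a ?b"
    using apow_mult[OF a(4) _ src_eq_rng_apow_uminus[OF a(4,6,10)]] a by simp
  ultimately show ?thesis
    using xyz groupoid_assoc[OF groupoid_H a(1,3,5,7,9)] by (simp add: twisted_product_simps)
qed

lemma twisted_product_ginv:
  assumes "x \<in> arr T"
  shows "ginv T x \<in> arr T \<and> rng T (ginv T x) = src T x \<and> src T (ginv T x) = rng T x \<and>
         mult T x (ginv T x) = rng T x \<and> mult T (ginv T x) x = src T x"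
proof -
  obtain h g where x: "x = (h, g)" "h \<in> arr H" "g \<in> arr G"
    using assms by (auto simp: twisted_product_simps)
  have "mult G (A (c h) (ginv G g)) (A (c h) g) = A (c h) (src G g)"
    using apow_mult[of "ginv G g" g "c h"] groupoid_ginv[OF groupoid x(3)] x by simp
  then show ?thesis
    using x groupoid_ginv[OF groupoid_H x(2)] groupoid_ginv[OF groupoid x(3)]
      cocycle_ginv[OF groupoid_H cocycle x(2)]
      groupoid_rng_arr[OF groupoid] groupoid_src_arr[OF groupoid]
    by (simp add: twisted_product_simps)
qed

lemma groupoid_twisted_product: "groupoid T"
proof -
  have "units T \<subseteq> arr T"
    using groupoid_units_arr[OF groupoid_H] groupoid_units_arr[OF groupoid]
    by (auto simp: twisted_product_simps)
  moreover have "\<forall>x\<in>arr T. rng T x \<in> units T \<and> src T x \<in> units T"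
    using groupoid_rng_units[OF groupoid_H] groupoid_src_units[OF groupoid_H]
      groupoid_rng_units[OF groupoid] groupoid_src_units[OF groupoid] apow_units
    by (auto simp: twisted_product_simps)
  moreover have "\<forall>x\<in>units T. rng T x = x \<and> src T x = x"
    using groupoid_rng_unit[OF groupoid_H] groupoid_src_unit[OF groupoid_H]
      groupoid_rng_unit[OF groupoid] groupoid_src_unit[OF groupoid]
      cocycle_unit[OF groupoid_H cocycle]
    by (auto simp: twisted_product_simps)
  moreover have "\<forall>x\<in>arr T. mult T (rng T x) x = x \<and> mult T x (src T x) = x"
    using groupoid_mult_rng[OF groupoid_H] groupoid_mult_src[OF groupoid_H]
      groupoid_mult_rng[OF groupoid] groupoid_mult_src[OF groupoid] groupoid_src_arr[OF groupoid]
      cocycle_unit[OF groupoid_H cocycle groupoid_rng_units[OF groupoid_H]]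
    by (auto simp: twisted_product_simps)
  ultimately show ?thesis
    unfolding groupoid_def using twisted_product_mult twisted_product_assoc twisted_product_ginv
    by blast
qed

end

context twisted_product_setting
begin

lemma continuous_map_twisted_product_mult:
  assumes c: "continuous_map (gtop H) (discrete_topology UNIV) c"
  shows "continuous_map (subtopology (prod_topology (gtop T) (gtop T)) (composable T)) (gtop T)
           (\<lambda>(x, y). mult T x y)"
proof -
  define Z where "Z = subtopology (prod_topology (gtop T) (gtop T)) (composable T)"
  have Z: "continuous_map Z (prod_topology (prod_topology (gtop H) (gtop G))
                                            (prod_topology (gtop H) (gtop G))) id"
    unfolding Z_def by (simp add: continuous_map_from_subtopology twisted_product_simps)
  have topspace_Z: "z \<in> topspace Z \<Longrightarrow> z \<in> composable T" for z
    by (simp add: Z_def)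
  have h1: "continuous_map Z (gtop H) (\<lambda>z. fst (fst z))"
    and h2: "continuous_map Z (gtop H) (\<lambda>z. fst (snd z))"
    and g1: "continuous_map Z (gtop G) (\<lambda>z. snd (fst z))"
    and g2: "continuous_map Z (gtop G) (\<lambda>z. snd (snd z))"
    using continuous_map_compose[OF Z continuous_map_compose[OF continuous_map_fst continuous_map_fst]]
      continuous_map_compose[OF Z continuous_map_compose[OF continuous_map_snd continuous_map_fst]]
      continuous_map_compose[OF Z continuous_map_compose[OF continuous_map_fst continuous_map_snd]]
      continuous_map_compose[OF Z continuous_map_compose[OF continuous_map_snd continuous_map_snd]]
    by (simp_all add: o_def twisted_product_simps)
  have twisted_g2: "continuous_map Z (gtop G) (\<lambda>z. A (- c (fst (fst z))) (snd (snd z)))"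
    using continuous_map_discrete_indexed[of Z "\<lambda>z. c (fst (fst z))" "gtop G"
      "\<lambda>n z. A (- n) (snd (snd z))"]
      continuous_map_compose[OF h1 c] continuous_map_compose[OF g2 continuous_map_apow]
    by (simp add: o_def)
  have pair_H: "continuous_map Z (subtopology (prod_topology (gtop H) (gtop H)) (composable H))
          (\<lambda>z. (fst (fst z), fst (snd z)))"
    using h1 h2 topspace_Z
    by (auto simp: continuous_map_in_subtopology continuous_map_pairedI composable_twisted_product
        split: prod.splits)
  have "(snd (fst z), A (- c (fst (fst z))) (snd (snd z))) \<in> composable G" if "z \<in> topspace Z" for z
  proof -
    obtain h1 g1 h2 g2 where z: "z = ((h1, g1), (h2, g2))"
      by (metis prod.collapse)
    then have "g1 \<in> arr G" "g2 \<in> arr G" "A (c h1) (src G g1) = rng G g2"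
      using topspace_Z[OF that] by (simp_all add: composable_twisted_product)
    then show ?thesis
      using src_eq_rng_apow_uminus[of g1 g2 "c h1"] z by (simp add: composable_def)
  qed
  then have pair_G: "continuous_map Z (subtopology (prod_topology (gtop G) (gtop G)) (composable G))
          (\<lambda>z. (snd (fst z), A (- c (fst (fst z))) (snd (snd z))))"
    using g1 twisted_g2 by (auto simp: continuous_map_in_subtopology continuous_map_pairedI)
  have mult: "continuous_map (subtopology (prod_topology (gtop H) (gtop H)) (composable H)) (gtop H)
          (\<lambda>(g, h). mult H g h)"
    "continuous_map (subtopology (prod_topology (gtop G) (gtop G)) (composable G)) (gtop G)
          (\<lambda>(g, h). mult G g h)"
    using topological_groupoid_H topological_groupoid by (simp_all add: topological_groupoid_def)
  have mult_H: "continuous_map Z (gtop H) (\<lambda>z. mult H (fst (fst z)) (fst (snd z)))"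
    and mult_G: "continuous_map Z (gtop G)
                   (\<lambda>z. mult G (snd (fst z)) (A (- c (fst (fst z))) (snd (snd z))))"
    using continuous_map_compose[OF pair_H mult(1)] continuous_map_compose[OF pair_G mult(2)]
    by (simp_all add: o_def)
  have "continuous_map Z (prod_topology (gtop H) (gtop G)) (\<lambda>(x, y). mult T x y)"
    by (rule continuous_map_eq[OF continuous_map_pairedI[OF mult_H mult_G]])
      (auto simp: twisted_product_simps split: prod.splits)
  then show ?thesis
    by (simp add: Z_def twisted_product_simps)
qed

lemma continuous_map_twisted_product_ginv:
  assumes c: "continuous_map (gtop H) (discrete_topology UNIV) c"
  shows "continuous_map (gtop T) (gtop T) (ginv T)"
proof -
  have ginv: "continuous_map (gtop H) (gtop H) (ginv H)" "continuous_map (gtop G) (gtop G) (ginv G)"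
    using topological_groupoid_H topological_groupoid by (simp_all add: topological_groupoid_def)
  have ginv_H: "continuous_map (gtop T) (gtop H) (\<lambda>z. ginv H (fst z))"
    using continuous_map_compose[OF continuous_map_fst ginv(1)]
    by (simp add: o_def twisted_product_simps)
  have "continuous_map (gtop T) (gtop G) (\<lambda>z. A n (ginv G (snd z)))" for n
    using continuous_map_compose[OF continuous_map_compose[OF continuous_map_snd ginv(2)]
      continuous_map_apow]
    by (simp add: o_def twisted_product_simps)
  moreover have "continuous_map (gtop T) (discrete_topology UNIV) (\<lambda>z. c (fst z))"
    using continuous_map_compose[OF continuous_map_fst c] by (simp add: o_def twisted_product_simps)
  ultimately have ginv_G: "continuous_map (gtop T) (gtop G) (\<lambda>z. A (c (fst z)) (ginv G (snd z)))"
    by (rule continuous_map_discrete_indexed[rotated])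
  have "continuous_map (gtop T) (prod_topology (gtop H) (gtop G)) (ginv T)"
    by (rule continuous_map_eq[OF continuous_map_pairedI[OF ginv_H ginv_G]])
      (auto simp: twisted_product_simps)
  then show ?thesis
    by (simp add: twisted_product_simps)
qed

lemma topological_groupoid_twisted_product:
  assumes "continuous_map (gtop H) (discrete_topology UNIV) c"
  shows "topological_groupoid T"
  unfolding topological_groupoid_def
  using groupoid_twisted_product continuous_map_twisted_product_mult[OF assms]
    continuous_map_twisted_product_ginv[OF assms] topspace topspace_H
  by (simp add: twisted_product_simps)

lemma etale_twisted_product:
  assumes "etale H" "etale G"
  shows "etale T"
  unfolding etale_def
proof
  fix z assume "z \<in> arr T"
  then obtain h g where z: "z = (h, g)" "h \<in> arr H" "g \<in> arr G"
    by (auto simp: twisted_product_simps)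
  obtain U where U: "openin (gtop H) U" "h \<in> U" "openin (subtopology (gtop H) (units H)) (rng H ` U)"
      "homeomorphic_map (subtopology (gtop H) U) (subtopology (gtop H) (rng H ` U)) (rng H)"
    using assms(1) z(2) unfolding etale_def by meson
  obtain V where V: "openin (gtop G) V" "g \<in> V" "openin (subtopology (gtop G) (units G)) (rng G ` V)"
      "homeomorphic_map (subtopology (gtop G) V) (subtopology (gtop G) (rng G ` V)) (rng G)"
    using assms(2) z(3) unfolding etale_def by meson
  show "\<exists>W. openin (gtop T) W \<and> z \<in> W \<and> openin (subtopology (gtop T) (units T)) (rng T ` W) \<and>
          homeomorphic_map (subtopology (gtop T) W) (subtopology (gtop T) (rng T ` W)) (rng T)"
    using prod_homeomorphic_onto_openin[OF U(3,4) V(3,4)] U(1,2) V(1,2) z(1)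
    by (intro exI[of _ "U \<times> V"]) (simp add: twisted_product_simps openin_prod_Times_iff)
qed

lemma open_bisection_twisted_product:
  assumes U: "open_bisection H U" and V: "open_bisection G V" and c_U: "\<And>h. h \<in> U \<Longrightarrow> c h = n"
  shows "open_bisection T (U \<times> V)"
proof -
  have "src G ` V \<subseteq> arr G"
    using openin_subset[OF open_bisectionD(1)[OF V]] topspace groupoid_src_arr[OF groupoid] by auto
  then have src_V: "openin (subtopology (gtop G) (units G)) ((A n \<circ> src G) ` V)"
      "homeomorphic_map (subtopology (gtop G) V) (subtopology (gtop G) ((A n \<circ> src G) ` V))
         (A n \<circ> src G)"
    unfolding image_comp[symmetric]
    using open_bisectionD(4,5)[OF V] openin_units_apow_image
      homeomorphic_map_compose[OF _ homeomorphic_map_apow_subtopology]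
    by blast+
  note rng_UV = prod_homeomorphic_onto_openin[OF open_bisectionD(2,3)[OF U]
    open_bisectionD(2,3)[OF V]]
  note src_UV = prod_homeomorphic_onto_openin[OF open_bisectionD(4,5)[OF U] src_V]
  let ?s = "\<lambda>(h, g). (src H h, (A n \<circ> src G) g)"
  have src_T: "src T w = ?s w" if "w \<in> U \<times> V" for w
    using that c_U by (auto simp: twisted_product_simps)
  then have src_image: "src T ` (U \<times> V) = ?s ` (U \<times> V)"
    by (rule image_cong[OF refl])
  show ?thesis
    unfolding open_bisection_def
  proof (intro conjI)
    show "openin (gtop T) (U \<times> V)"
      using open_bisectionD(1)[OF U] open_bisectionD(1)[OF V]
      by (simp add: twisted_product_simps openin_prod_Times_iff)
    show "openin (subtopology (gtop T) (units T)) (rng T ` (U \<times> V))"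
      "homeomorphic_map (subtopology (gtop T) (U \<times> V))
        (subtopology (gtop T) (rng T ` (U \<times> V))) (rng T)"
      using rng_UV by (simp_all only: twisted_product_simps)
    show "openin (subtopology (gtop T) (units T)) (src T ` (U \<times> V))"
      using src_UV(1) by (simp only: twisted_product_simps src_image)
    show "homeomorphic_map (subtopology (gtop T) (U \<times> V))
        (subtopology (gtop T) (src T ` (U \<times> V))) (src T)"
    proof (rule homeomorphic_map_eq)
      show "homeomorphic_map (subtopology (gtop T) (U \<times> V))
        (subtopology (gtop T) (src T ` (U \<times> V))) ?s"
        using src_UV(2) by (simp only: twisted_product_simps src_image)
      fix w assume "w \<in> topspace (subtopology (gtop T) (U \<times> V))"
      then show "?s w = src T w"
        using src_T by simp
    qed
  qed
qed

lemma ample_twisted_product: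
  assumes c: "continuous_map (gtop H) (discrete_topology UNIV) c" and "ample H" "ample G"
  shows "ample T"
  unfolding ample_def
proof (intro allI impI ballI)
  fix W z assume W: "openin (gtop T) W" and "z \<in> W"
  then obtain U V where UV: "openin (gtop H) U" "openin (gtop G) V" "fst z \<in> U" "snd z \<in> V"
      "U \<times> V \<subseteq> W"
    by (metis openin_prod_topology_alt prod.collapse twisted_product_simps(7))
  have "openin (gtop H) (U \<inter> {h \<in> topspace (gtop H). c h \<in> {c (fst z)}})"
    by (rule openin_Int[OF UV(1) openin_continuous_map_preimage[OF c]]) simp
  moreover have "fst z \<in> U \<inter> {h \<in> topspace (gtop H). c h \<in> {c (fst z)}}"
    using openin_subset[OF UV(1)] UV(3) by auto
  ultimately obtain B where B: "open_bisection H B" "compactin (gtop H) B" "fst z \<in> B"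
      "B \<subseteq> U \<inter> {h \<in> topspace (gtop H). c h \<in> {c (fst z)}}"
    using \<open>ample H\<close> unfolding ample_def by meson
  obtain C where C: "open_bisection G C" "compactin (gtop G) C" "snd z \<in> C" "C \<subseteq> V"
    using \<open>ample G\<close> UV(2,4) unfolding ample_def by meson
  have "open_bisection T (B \<times> C)"
    by (rule open_bisection_twisted_product[OF B(1) C(1), of "c (fst z)"]) (use B(4) in auto)
  moreover have "compactin (gtop T) (B \<times> C)"
    using B(2) C(2) by (simp add: twisted_product_simps compactin_Times)
  ultimately show "\<exists>D. open_bisection T D \<and> compactin (gtop T) D \<and> z \<in> D \<and> D \<subseteq> W"
    using B(3,4) C(3,4) UV(5) by (intro exI[of _ "B \<times> C"]) (auto simp: mem_Times_iff)
qed

end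

theorem lemma3p2:
  fixes H :: "'h tgroupoid" and G :: "'g tgroupoid"
    and c :: "'h \<Rightarrow> int" and \<alpha> :: "'g \<Rightarrow> 'g"
  assumes "topological_groupoid H" "locally_compact_space (gtop H)"
      "Hausdorff_space (gtop H)" "etale H"
    and "topological_groupoid G" "locally_compact_space (gtop G)"
      "Hausdorff_space (gtop G)" "etale G"
    and "cocycle H c" "continuous_map (gtop H) (discrete_topology UNIV) c"
    and "groupoid_automorphism G \<alpha>"
  shows "topological_groupoid (twisted_product H c \<alpha> G) \<and>
         locally_compact_space (gtop (twisted_product H c \<alpha> G)) \<and>
         Hausdorff_space (gtop (twisted_product H c \<alpha> G)) \<and>
         etale (twisted_product H c \<alpha> G) \<and>
         (second_countable (gtop H) \<and> second_countable (gtop G) \<longrightarrow>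
            second_countable (gtop (twisted_product H c \<alpha> G))) \<and>
         (ample H \<and> ample G \<longrightarrow> ample (twisted_product H c \<alpha> G))"
proof -
  interpret twisted_product_setting G \<alpha> H c
    by unfold_locales (use assms in simp_all)
  show ?thesis
    using topological_groupoid_twisted_product[OF assms(10)] etale_twisted_product[OF assms(4,8)]
      ample_twisted_product[OF assms(10)]
      locally_compact_space_prod_topology[of "gtop H" "gtop G"] assms(2,6)
      Hausdorff_space_prod_topology[of "gtop H" "gtop G"] assms(3,7)
      second_countable_prod_topology[of "gtop H" "gtop G"]
    by (simp add: twisted_product_simps)
qed

end
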